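(* Let $A$ and $\hat A$ be real $n\times n$ matrices, both in ordered real Schur form, and let $U$ be a real orthogonal matrix with $\hat AU=UA$. Let $m$ be the number of distinct complex conjugate pairs of non-real eigenvalues plus the number of distinct real eigenvalues of $A$. Partition $A$, $\hat A$ and $U$ conformally into $m\times m$ block form, where each diagonal block index corresponds to the maximal set of consecutive diagonal Schur blocks sharing the same eigenvalue(s). Then $U=U_1\oplus U_2\oplus\cdots\oplus U_m$ with each $U_i$ orthogonal.
   Context: A real matrix $A$ is in real Schur form if it is block upper triangular with diagonal blocks $Z_1,\dots,Z_M$ (in this order), where $Z_1,\dots,Z_\ell$ are $2\times 2$ real blocks each having a pair of non-real complex conjugate eigenvalues and $Z_{\ell+1},\dots,Z_M$ are $1\times1$ real blocks ($M=n-\ell$). Writing $\lambda^{(k)}$ for an eigenvalue of $Z_k$, $A$ is in ordered real Schur form if (1) $|\lambda^{(i)}|\le|\lambda^{(j)}|$ whenever $i<j\le\ell$ or $\ell<i<j\le M$, and (2) if in such a case $|\lambda^{(i)}|=|\lambda^{(j)}|$, then $\operatorname{Re}\lambda^{(j)}\le\operatorname{Re}\lambda^{(i)}$. (Under this ordering, diagonal blocks with equal eigenvalues are consecutive.) *)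

theory Defs
  imports Complex_Main "Jordan_Normal_Form.Matrix" "Jordan_Normal_Form.Char_Poly"
begin

definition real_orthogonal :: "nat \<Rightarrow> real mat \<Rightarrow> bool" where
  "real_orthogonal n U \<longleftrightarrow> U \<in> carrier_mat n n \<and> transpose_mat U * U = 1\<^sub>m n"

text \<open>A list bs of diagonal block sizes; the k-th block starts at row/column blk_start bs k.\<close>
definition blk_start :: "nat list \<Rightarrow> nat \<Rightarrow> nat" where
  "blk_start bs k = sum_list (take k bs)"

definition blk_of :: "nat list \<Rightarrow> nat \<Rightarrow> nat" where
  "blk_of bs i = (LEAST k. i < blk_start bs (Suc k))"

definition diag_blk :: "real mat \<Rightarrow> nat list \<Rightarrow> nat \<Rightarrow> real mat" where
  "diag_blk A bs k = mat (bs ! k) (bs ! k) (\<lambda>(i, j). A $$ (blk_start bs k + i, blk_start bs k + j))"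

definition blk_eigs :: "real mat \<Rightarrow> nat list \<Rightarrow> nat \<Rightarrow> complex set" where
  "blk_eigs A bs k = {z. eigenvalue (map_mat complex_of_real (diag_blk A bs k)) z}"

definition real_schur_form :: "real mat \<Rightarrow> nat list \<Rightarrow> nat \<Rightarrow> bool" where
  "real_schur_form A bs l \<longleftrightarrow>
     A \<in> carrier_mat (sum_list bs) (sum_list bs) \<and>
     l \<le> length bs \<and>
     bs = replicate l 2 @ replicate (length bs - l) 1 \<and>
     (\<forall>i < sum_list bs. \<forall>j < sum_list bs. blk_of bs j < blk_of bs i \<longrightarrow> A $$ (i, j) = 0) \<and>
     (\<forall>k < l. \<forall>z \<in> blk_eigs A bs k. Im z \<noteq> 0)"

definition ordered_real_schur_form :: "real mat \<Rightarrow> nat list \<Rightarrow> nat \<Rightarrow> bool" where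
  "ordered_real_schur_form A bs l \<longleftrightarrow>
     real_schur_form A bs l \<and>
     (\<forall>i j. i < j \<and> ((j < l) \<or> (l \<le> i \<and> j < length bs)) \<longrightarrow>
        (\<forall>z \<in> blk_eigs A bs i. \<forall>w \<in> blk_eigs A bs j.
            cmod z \<le> cmod w \<and> (cmod z = cmod w \<longrightarrow> Re w \<le> Re z)))"

text \<open>Merge maximal runs of consecutive blocks with equal eigenvalue sets;
  input: list of (eigenvalue set, block size), output: sizes of the merged groups.\<close>
fun merge_runs :: "('e \<times> nat) list \<Rightarrow> nat list" where
  "merge_runs [] = []"
| "merge_runs [(e, s)] = [s]"
| "merge_runs ((e, s) # (e', s') # r) =
     (if e = e' then merge_runs ((e, s + s') # r) else s # merge_runs ((e', s') # r))"

text \<open>Sizes of the m eigenvalue groups of A (block sizes of the conformal m x m partition).\<close>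
definition eig_group_sizes :: "real mat \<Rightarrow> nat list \<Rightarrow> nat list" where
  "eig_group_sizes A bs = merge_runs (map (\<lambda>k. (blk_eigs A bs k, bs ! k)) [0..<length bs])"

end

theory Submission
  imports Defs "HOL-Library.Product_Lexorder" "Jordan_Normal_Form.Schur_Decomposition"
begin

text \<open>U intertwines Ahat and A, so the two matrices have the same spectrum. Both are block upper
  triangular with their diagonal blocks sorted by eigenvalue pairs, so the first eigenvalue group of
  each carries the same pair {v, cnj v}, v being the least eigenvalue in the closed upper half plane
  with respect to the sorting key, and this pair occurs in no later block. In the 2 x 2 block form of
  U along these first groups, Sylvester's theorem (B X = X C forces X = 0 when B and C have no common
  eigenvalue) kills the lower left block, and applied to the transposed relation A U' = U' Ahat also
  the upper right one. Orthogonality of U then forces the two groups to have the same size and makes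
  both diagonal blocks of U orthogonal, the lower one intertwining the trailing parts of Ahat and A
  again, so induction on the number of diagonal blocks finishes the proof.\<close>

section \<open>Submatrices and block triangular splittings\<close>

definition submat :: "'a mat \<Rightarrow> nat \<Rightarrow> nat \<Rightarrow> nat \<Rightarrow> nat \<Rightarrow> 'a mat" where
  "submat M a b p q = mat p q (\<lambda>(i, j). M $$ (a + i, b + j))"

lemma submat_carrier [simp]: "submat M a b p q \<in> carrier_mat p q"
  and dim_row_submat [simp]: "dim_row (submat M a b p q) = p"
  and dim_col_submat [simp]: "dim_col (submat M a b p q) = q"
  by (auto simp: submat_def)

lemma index_submat [simp]: "i < p \<Longrightarrow> j < q \<Longrightarrow> submat M a b p q $$ (i, j) = M $$ (a + i, b + j)"
  by (simp add: submat_def)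

lemma map_mat_submat:
  "a + p \<le> dim_row M \<Longrightarrow> b + q \<le> dim_col M \<Longrightarrow>
   map_mat f (submat M a b p q) = submat (map_mat f M) a b p q"
  by (rule eq_matI) auto

definition lower_left_zero :: "'a::zero mat \<Rightarrow> nat \<Rightarrow> bool" where
  "lower_left_zero M k \<longleftrightarrow> (\<forall>i j. i < dim_row M \<longrightarrow> j < k \<longrightarrow> k \<le> i \<longrightarrow> M $$ (i, j) = 0)"

lemma lower_left_zeroD: "lower_left_zero M k \<Longrightarrow> i < dim_row M \<Longrightarrow> j < k \<Longrightarrow> k \<le> i \<Longrightarrow> M $$ (i, j) = 0"
  unfolding lower_left_zero_def by blast

lemma lower_left_zero_map_mat:
  "lower_left_zero M k \<Longrightarrow> k \<le> dim_col M \<Longrightarrow> f 0 = 0 \<Longrightarrow> lower_left_zero (map_mat f M) k"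
  unfolding lower_left_zero_def by auto

lemma sum_zero_prefix:
  fixes f :: "nat \<Rightarrow> 'a::comm_monoid_add"
  assumes "m \<le> n" "\<And>t. t < m \<Longrightarrow> f t = 0"
  shows "(\<Sum>t<n. f t) = (\<Sum>t<n - m. f (m + t))"
proof -
  have "(\<Sum>t<n. f t) = (\<Sum>t\<in>{m..<n}. f t)"
    using assms by (intro sum.mono_neutral_right) auto
  also have "\<dots> = (\<Sum>t<n - m. f (m + t))"
    by (simp add: sum.atLeastLessThan_shift_0 atLeast0LessThan comp_def)
  finally show ?thesis .
qed

lemma sum_zero_suffix:
  fixes f :: "nat \<Rightarrow> 'a::comm_monoid_add"
  assumes "m \<le> n" "\<And>t. m \<le> t \<Longrightarrow> t < n \<Longrightarrow> f t = 0"
  shows "(\<Sum>t<n. f t) = (\<Sum>t<m. f t)"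
  using assms by (intro sum.mono_neutral_right) auto

lemma eigenvalue_lower_left_zero:
  fixes M :: "'a::field mat"
  assumes M: "M \<in> carrier_mat n n" and k: "k \<le> n" and z: "lower_left_zero M k"
  shows "eigenvalue M e \<longleftrightarrow>
    eigenvalue (submat M 0 0 k k) e \<or> eigenvalue (submat M k k (n - k) (n - k)) e"
proof -
  let ?A = "submat M 0 0 k k" and ?D = "submat M k k (n - k) (n - k)"
  have "char_matrix M e =
      four_block_mat (char_matrix ?A e) (submat M 0 k k (n - k)) (0\<^sub>m (n - k) k) (char_matrix ?D e)"
    using M k lower_left_zeroD[OF z] by (intro eq_matI) (auto simp: char_matrix_def)
  then have "det (char_matrix M e) = det (char_matrix ?A e) * det (char_matrix ?D e)"
    by (simp add: det_four_block_mat_lower_left_zero[of _ k _ "n - k"])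
  then show ?thesis
    by (simp add: eigenvalue_det[OF M] eigenvalue_det[OF submat_carrier])
qed

section \<open>Sylvester's equation\<close>

lemma eigenvalue_diag_upper_triangular:
  fixes T :: "'a::field mat"
  assumes T: "T \<in> carrier_mat n n" and "upper_triangular T" and "j < n"
  shows "eigenvalue T (T $$ (j, j))"
proof -
  have "T $$ (j, j) \<in> set (diag_mat T)"
    using T \<open>j < n\<close> by (auto simp: diag_mat_def)
  then have "poly (\<Prod>a\<leftarrow>diag_mat T. [:- a, 1:]) (T $$ (j, j)) = 0"
    by (force simp: poly_prod_list prod_list_zero_iff)
  then show ?thesis
    by (simp add: eigenvalue_root_char_poly[OF T] char_poly_upper_triangular[OF T \<open>upper_triangular T\<close>])
qed

lemma intertwiner_upper_triangular_zero:
  fixes B T Y :: "'a::field mat"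
  assumes B: "B \<in> carrier_mat p p" and T: "T \<in> carrier_mat q q" and Y: "Y \<in> carrier_mat p q"
    and ut: "upper_triangular T" and BY: "B * Y = Y * T"
    and diag: "\<And>j. j < q \<Longrightarrow> \<not> eigenvalue B (T $$ (j, j))"
  shows "Y = 0\<^sub>m p q"
proof -
  \<comment> \<open>once the earlier columns of Y vanish, column j is an eigenvector of B for T j j or zero\<close>
  have "col Y j = 0\<^sub>v p" if "j < q" for j
    using that
  proof (induction j rule: less_induct)
    case (less j)
    have "B *\<^sub>v col Y j = T $$ (j, j) \<cdot>\<^sub>v col Y j"
    proof (rule eq_vecI)
      fix i assume "i < dim_vec (T $$ (j, j) \<cdot>\<^sub>v col Y j)"
      then have i: "i < p" using Y by simp
      have "(B *\<^sub>v col Y j) $ i = (Y * T) $$ (i, j)"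
        using B Y i less.prems by (simp flip: BY)
      also have "\<dots> = (\<Sum>t\<in>{0..<q}. Y $$ (i, t) * T $$ (t, j))"
        using Y T i less.prems by (simp add: scalar_prod_def)
      also have "\<dots> = Y $$ (i, j) * T $$ (j, j) + (\<Sum>t\<in>{0..<q} - {j}. Y $$ (i, t) * T $$ (t, j))"
        using less.prems by (intro sum.remove) auto
      also have "(\<Sum>t\<in>{0..<q} - {j}. Y $$ (i, t) * T $$ (t, j)) = 0"
      proof (rule sum.neutral, intro ballI)
        fix t assume t: "t \<in> {0..<q} - {j}"
        show "Y $$ (i, t) * T $$ (t, j) = 0"
        proof (cases "t < j")
          case True
          then have "col Y t $ i = 0" using less.IH[of t] less.prems i by simp
          then show ?thesis using i Y t by simp
        next
          case False
          then show ?thesis using ut T t less.prems by (auto simp: upper_triangular_def)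
        qed
      qed
      also have "Y $$ (i, j) * T $$ (j, j) + 0 = (T $$ (j, j) \<cdot>\<^sub>v col Y j) $ i"
        using i Y less.prems by simp
      finally show "(B *\<^sub>v col Y j) $ i = (T $$ (j, j) \<cdot>\<^sub>v col Y j) $ i" .
    qed (use B Y in auto)
    moreover have "col Y j \<in> carrier_vec p"
      using Y less.prems by simp
    ultimately show ?case
      using diag[OF less.prems] B unfolding eigenvalue_def eigenvector_def by blast
  qed
  then have "Y $$ (i, j) = 0" if "i < p" "j < q" for i j
    using that Y by (metis carrier_matD index_col index_zero_vec(1))
  then show ?thesis
    using Y by (intro eq_matI) auto
qed

lemma intertwiner_zero_if_disjoint_spectra:
  fixes B C X :: "complex mat"
  assumes B: "B \<in> carrier_mat p p" and C: "C \<in> carrier_mat q q" and X: "X \<in> carrier_mat p q"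
    and BX: "B * X = X * C" and disjoint: "\<And>e. eigenvalue C e \<Longrightarrow> \<not> eigenvalue B e"
  shows "X = 0\<^sub>m p q"
proof -
  obtain es where "char_poly C = (\<Prod>a\<leftarrow>es. [:- a, 1:])"
    using char_poly_factorized[OF C] by blast
  from schur_decomposition_exists[OF C this] obtain T where
    T: "T \<in> carrier_mat q q" and ut: "upper_triangular T" and "similar_mat C T"
    by blast
  then obtain P Q where P: "P \<in> carrier_mat q q" and Q: "Q \<in> carrier_mat q q"
    and PQ: "P * Q = 1\<^sub>m q" and QP: "Q * P = 1\<^sub>m q" and CPTQ: "C = P * T * Q"
    using similar_matD[OF \<open>similar_mat C T\<close>] C by auto
  have "char_poly T = char_poly C"
    using \<open>similar_mat C T\<close> by (simp add: char_poly_similar)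
  then have eig_T: "eigenvalue C (T $$ (j, j))" if "j < q" for j
    using eigenvalue_diag_upper_triangular[OF T ut that]
    by (simp add: eigenvalue_root_char_poly[OF T] eigenvalue_root_char_poly[OF C])
  have "B * (X * P) = X * (P * T * Q) * P"
    using assoc_mult_mat[OF B X P] by (simp add: BX CPTQ)
  also have "\<dots> = X * P * T * (Q * P)"
    using X P T Q by (simp add: assoc_mult_mat[of _ p q _ q _ q] assoc_mult_mat[of _ q q _ q _ q])
  also have "\<dots> = X * P * T"
    using X P T by (simp add: QP)
  finally have "B * (X * P) = X * P * T" .
  then have "X * P = 0\<^sub>m p q"
    using eig_T disjoint by (intro intertwiner_upper_triangular_zero[OF B T _ ut]) (use X P in auto)
  then have "X * P * Q = 0\<^sub>m p q"
    using Q by simp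
  then show ?thesis
    using X P Q by (simp add: assoc_mult_mat[OF X P Q] PQ)
qed

lemma intertwiner_lower_left_zero:
  fixes A B U :: "complex mat"
  assumes A: "A \<in> carrier_mat n n" and B: "B \<in> carrier_mat n n" and U: "U \<in> carrier_mat n n"
    and BU: "B * U = U * A" and k: "k \<le> n" and k': "k' \<le> n"
    and zA: "lower_left_zero A k" and zB: "lower_left_zero B k'"
    and disjoint: "\<And>e. eigenvalue (submat A 0 0 k k) e \<Longrightarrow>
      \<not> eigenvalue (submat B k' k' (n - k') (n - k')) e"
    and ij: "k' \<le> i" "i < n" "j < k"
  shows "U $$ (i, j) = 0"
proof -
  let ?X = "submat U k' 0 (n - k') k"
  have "submat B k' k' (n - k') (n - k') * ?X = ?X * submat A 0 0 k k"
  proof (rule eq_matI)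
    fix a b assume "a < dim_row (?X * submat A 0 0 k k)" "b < dim_col (?X * submat A 0 0 k k)"
    then have ab: "a < n - k'" "b < k" by auto
    have "(submat B k' k' (n - k') (n - k') * ?X) $$ (a, b) =
        (\<Sum>t<n - k'. B $$ (k' + a, k' + t) * U $$ (k' + t, b))"
      using ab by (simp add: scalar_prod_def atLeast0LessThan)
    also have "\<dots> = (\<Sum>t<n. B $$ (k' + a, t) * U $$ (t, b))"
      using k' ab B by (intro sum_zero_prefix[symmetric]) (auto intro: lower_left_zeroD[OF zB])
    also have "\<dots> = (U * A) $$ (k' + a, b)"
      using ab B U k by (simp add: scalar_prod_def atLeast0LessThan flip: BU)
    also have "\<dots> = (\<Sum>t<k. U $$ (k' + a, t) * A $$ (t, b))"
      using ab A U k
      by (simp add: scalar_prod_def atLeast0LessThan, intro sum_zero_suffix)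
        (auto intro: lower_left_zeroD[OF zA])
    also have "\<dots> = (?X * submat A 0 0 k k) $$ (a, b)"
      using ab by (simp add: scalar_prod_def atLeast0LessThan)
    finally show "(submat B k' k' (n - k') (n - k') * ?X) $$ (a, b) = (?X * submat A 0 0 k k) $$ (a, b)" .
  qed auto
  then have "?X = 0\<^sub>m (n - k') k"
    by (intro intertwiner_zero_if_disjoint_spectra[where B = "submat B k' k' (n - k') (n - k')"
          and C = "submat A 0 0 k k"]) (auto dest: disjoint)
  then have "?X $$ (i - k', j) = 0"
    using ij by simp
  then show ?thesis
    using ij by simp
qed

section \<open>Orthogonal intertwiners\<close>

abbreviation cmat :: "real mat \<Rightarrow> complex mat" where
  "cmat \<equiv> map_mat complex_of_real"

lemma cmat_mult: "A \<in> carrier_mat n m \<Longrightarrow> B \<in> carrier_mat m p \<Longrightarrow> cmat (A * B) = cmat A * cmat B"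
  by (rule of_real_hom.mat_hom_mult)

lemma orthogonal_intertwiner_transpose:
  fixes A B U :: "'a::field mat"
  assumes A: "A \<in> carrier_mat n n" and B: "B \<in> carrier_mat n n" and U: "U \<in> carrier_mat n n"
    and UtU: "transpose_mat U * U = 1\<^sub>m n" and BU: "B * U = U * A"
  shows "A * transpose_mat U = transpose_mat U * B"
proof -
  have Ut: "transpose_mat U \<in> carrier_mat n n"
    using U by simp
  have UUt: "U * transpose_mat U = 1\<^sub>m n"
    by (rule mat_mult_left_right_inverse[OF Ut U UtU])
  have "transpose_mat U * B = transpose_mat U * B * (U * transpose_mat U)"
    using Ut B by (simp add: UUt)
  also have "\<dots> = transpose_mat U * (B * U) * transpose_mat U"
    using Ut B U by (simp add: assoc_mult_mat[of _ n n _ n _ n])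
  also have "\<dots> = (transpose_mat U * U) * A * transpose_mat U"
    using Ut U A by (simp add: BU assoc_mult_mat[of _ n n _ n _ n])
  also have "\<dots> = A * transpose_mat U"
    using A by (simp add: UtU)
  finally show ?thesis ..
qed

lemma orthogonal_intertwiner_eigenvalue_iff:
  fixes A B U :: "real mat"
  assumes A: "A \<in> carrier_mat n n" and B: "B \<in> carrier_mat n n"
    and orth: "real_orthogonal n U" and BU: "B * U = U * A"
  shows "eigenvalue (cmat A) z \<longleftrightarrow> eigenvalue (cmat B) z"
proof -
  have U: "U \<in> carrier_mat n n" and UtU: "transpose_mat U * U = 1\<^sub>m n"
    using orth by (auto simp: real_orthogonal_def)
  have Ut: "transpose_mat U \<in> carrier_mat n n"
    using U by simp
  have UUt: "U * transpose_mat U = 1\<^sub>m n"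
    by (rule mat_mult_left_right_inverse[OF Ut U UtU])
  have "B = B * (U * transpose_mat U)"
    using B by (simp add: UUt)
  also have "\<dots> = U * A * transpose_mat U"
    using B U Ut by (simp add: BU flip: assoc_mult_mat[OF B U Ut])
  finally have "cmat B = cmat U * cmat A * cmat (transpose_mat U)"
    using A U Ut by (simp add: cmat_mult[of _ n n _ n])
  moreover have "cmat U * cmat (transpose_mat U) = 1\<^sub>m n" "cmat (transpose_mat U) * cmat U = 1\<^sub>m n"
    using U Ut by (simp_all add: UUt UtU of_real_hom.mat_hom_one flip: cmat_mult)
  ultimately have "similar_mat_wit (cmat B) (cmat A) (cmat U) (cmat (transpose_mat U))"
    using A B U Ut by (intro similar_mat_witI[of _ _ n]) auto
  then have "similar_mat (cmat B) (cmat A)"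
    unfolding similar_mat_def by blast
  then have "char_poly (cmat B) = char_poly (cmat A)"
    by (rule char_poly_similar)
  then show ?thesis
    using A B by (simp add: eigenvalue_root_char_poly[of _ n])
qed

lemma orthogonal_zero_blocks_eq:
  fixes U :: "real mat"
  assumes U: "U \<in> carrier_mat n n" and UtU: "transpose_mat U * U = 1\<^sub>m n"
    and k: "k \<le> n" and k': "k' \<le> n"
    and lower: "\<And>i j. k' \<le> i \<Longrightarrow> i < n \<Longrightarrow> j < k \<Longrightarrow> U $$ (i, j) = 0"
    and upper: "\<And>i j. i < k' \<Longrightarrow> k \<le> j \<Longrightarrow> j < n \<Longrightarrow> U $$ (i, j) = 0"
  shows "k' = k"
proof -
  have UUt: "U * transpose_mat U = 1\<^sub>m n"
    using mat_mult_left_right_inverse[OF transpose_carrier_mat[THEN iffD2, OF U] U UtU] .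
  \<comment> \<open>count the squared entries of the upper left k' x k corner by columns and by rows\<close>
  have col: "(\<Sum>i<k'. U $$ (i, j) * U $$ (i, j)) = 1" if "j < k" for j
  proof -
    have "1 = (transpose_mat U * U) $$ (j, j)"
      using that k by (simp add: UtU)
    also have "\<dots> = (\<Sum>i<n. U $$ (i, j) * U $$ (i, j))"
      using that k U by (simp add: scalar_prod_def atLeast0LessThan)
    also have "\<dots> = (\<Sum>i<k'. U $$ (i, j) * U $$ (i, j))"
      using k' lower that by (intro sum_zero_suffix) auto
    finally show ?thesis by simp
  qed
  have row: "(\<Sum>j<k. U $$ (i, j) * U $$ (i, j)) = 1" if "i < k'" for i
  proof -
    have "1 = (U * transpose_mat U) $$ (i, i)"
      using that k' by (simp add: UUt)
    also have "\<dots> = (\<Sum>j<n. U $$ (i, j) * U $$ (i, j))"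
      using that k' U by (simp add: scalar_prod_def atLeast0LessThan)
    also have "\<dots> = (\<Sum>j<k. U $$ (i, j) * U $$ (i, j))"
      using k upper that by (intro sum_zero_suffix) auto
    finally show ?thesis by simp
  qed
  have "real k = (\<Sum>j<k. \<Sum>i<k'. U $$ (i, j) * U $$ (i, j))"
    using col by simp
  also have "\<dots> = (\<Sum>i<k'. \<Sum>j<k. U $$ (i, j) * U $$ (i, j))"
    by (rule sum.swap)
  also have "\<dots> = real k'"
    using row by simp
  finally show ?thesis by simp
qed

lemma block_diagonal_orthogonal:
  fixes U :: "real mat"
  assumes "real_orthogonal n U" and k: "k \<le> n"
    and off: "\<And>i j. i < n \<Longrightarrow> j < n \<Longrightarrow> (i < k) \<noteq> (j < k) \<Longrightarrow> U $$ (i, j) = 0"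
  shows "U = four_block_mat (submat U 0 0 k k) (0\<^sub>m k (n - k)) (0\<^sub>m (n - k) k)
      (submat U k k (n - k) (n - k))"
    and "real_orthogonal k (submat U 0 0 k k)"
    and "real_orthogonal (n - k) (submat U k k (n - k) (n - k))"
proof -
  have U: "U \<in> carrier_mat n n" and UtU: "transpose_mat U * U = 1\<^sub>m n"
    using assms(1) by (auto simp: real_orthogonal_def)
  have UtU_entry: "(\<Sum>t<n. U $$ (t, a) * U $$ (t, b)) = 1\<^sub>m n $$ (a, b)" if "a < n" "b < n" for a b
    using that U by (simp add: scalar_prod_def atLeast0LessThan flip: UtU)
  show "U = four_block_mat (submat U 0 0 k k) (0\<^sub>m k (n - k)) (0\<^sub>m (n - k) k)
      (submat U k k (n - k) (n - k))"
    using U k off by (intro eq_matI) auto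
  have "transpose_mat (submat U 0 0 k k) * submat U 0 0 k k = 1\<^sub>m k"
  proof (rule eq_matI)
    fix a b assume "a < dim_row (1\<^sub>m k)" "b < dim_col (1\<^sub>m k)"
    then have ab: "a < k" "b < k" by auto
    have "(transpose_mat (submat U 0 0 k k) * submat U 0 0 k k) $$ (a, b) =
        (\<Sum>t<k. U $$ (t, a) * U $$ (t, b))"
      using ab by (simp add: scalar_prod_def atLeast0LessThan)
    also have "\<dots> = (\<Sum>t<n. U $$ (t, a) * U $$ (t, b))"
      using k off ab by (intro sum_zero_suffix[symmetric]) auto
    also have "\<dots> = 1\<^sub>m k $$ (a, b)"
      using ab k by (simp add: UtU_entry)
    finally show "(transpose_mat (submat U 0 0 k k) * submat U 0 0 k k) $$ (a, b) = 1\<^sub>m k $$ (a, b)" .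
  qed auto
  then show "real_orthogonal k (submat U 0 0 k k)"
    by (simp add: real_orthogonal_def)
  have "transpose_mat (submat U k k (n - k) (n - k)) * submat U k k (n - k) (n - k) = 1\<^sub>m (n - k)"
  proof (rule eq_matI)
    fix a b assume "a < dim_row (1\<^sub>m (n - k))" "b < dim_col (1\<^sub>m (n - k))"
    then have ab: "a < n - k" "b < n - k" by auto
    have "(transpose_mat (submat U k k (n - k) (n - k)) * submat U k k (n - k) (n - k)) $$ (a, b) =
        (\<Sum>t<n - k. U $$ (k + t, k + a) * U $$ (k + t, k + b))"
      using ab by (simp add: scalar_prod_def atLeast0LessThan)
    also have "\<dots> = (\<Sum>t<n. U $$ (t, k + a) * U $$ (t, k + b))"
      using k off ab by (intro sum_zero_prefix[symmetric]) auto
    also have "\<dots> = 1\<^sub>m (n - k) $$ (a, b)"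
      using ab k by (simp add: UtU_entry)
    finally show "(transpose_mat (submat U k k (n - k) (n - k)) * submat U k k (n - k) (n - k)) $$ (a, b) =
        1\<^sub>m (n - k) $$ (a, b)" .
  qed auto
  then show "real_orthogonal (n - k) (submat U k k (n - k) (n - k))"
    by (simp add: real_orthogonal_def)
qed

lemma intertwiner_lower_right_block:
  fixes A B U :: "'a::comm_semiring_0 mat"
  assumes A: "A \<in> carrier_mat n n" and B: "B \<in> carrier_mat n n" and U: "U \<in> carrier_mat n n"
    and BU: "B * U = U * A" and k: "k \<le> n"
    and zB: "lower_left_zero B k" and zU: "lower_left_zero U k"
  shows "submat B k k (n - k) (n - k) * submat U k k (n - k) (n - k) =
    submat U k k (n - k) (n - k) * submat A k k (n - k) (n - k)"
proof (rule eq_matI)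
  fix a b assume "a < dim_row (submat U k k (n - k) (n - k) * submat A k k (n - k) (n - k))"
    "b < dim_col (submat U k k (n - k) (n - k) * submat A k k (n - k) (n - k))"
  then have ab: "a < n - k" "b < n - k" by auto
  have "(submat B k k (n - k) (n - k) * submat U k k (n - k) (n - k)) $$ (a, b) =
      (\<Sum>t<n - k. B $$ (k + a, k + t) * U $$ (k + t, k + b))"
    using ab by (simp add: scalar_prod_def atLeast0LessThan)
  also have "\<dots> = (\<Sum>t<n. B $$ (k + a, t) * U $$ (t, k + b))"
    using k ab B lower_left_zeroD[OF zB] by (intro sum_zero_prefix[symmetric]) auto
  also have "\<dots> = (U * A) $$ (k + a, k + b)"
    using ab B U by (simp add: scalar_prod_def atLeast0LessThan flip: BU)
  also have "\<dots> = (\<Sum>t<n. U $$ (k + a, t) * A $$ (t, k + b))"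
    using ab A U by (simp add: scalar_prod_def atLeast0LessThan)
  also have "\<dots> = (\<Sum>t<n - k. U $$ (k + a, k + t) * A $$ (k + t, k + b))"
    using k ab U lower_left_zeroD[OF zU] by (intro sum_zero_prefix) auto
  also have "\<dots> = (submat U k k (n - k) (n - k) * submat A k k (n - k) (n - k)) $$ (a, b)"
    using ab by (simp add: scalar_prod_def atLeast0LessThan)
  finally show "(submat B k k (n - k) (n - k) * submat U k k (n - k) (n - k)) $$ (a, b) =
    (submat U k k (n - k) (n - k) * submat A k k (n - k) (n - k)) $$ (a, b)" .
qed auto

lemma orthogonal_intertwiner_splits:
  fixes A B U :: "real mat"
  assumes A: "A \<in> carrier_mat n n" and B: "B \<in> carrier_mat n n" and orth: "real_orthogonal n U"
    and BU: "B * U = U * A" and k: "k \<le> n" and k': "k' \<le> n"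
    and zA: "lower_left_zero A k" and zB: "lower_left_zero B k'"
    and disjoint_AB: "\<And>e. eigenvalue (cmat (submat A 0 0 k k)) e \<Longrightarrow>
      \<not> eigenvalue (cmat (submat B k' k' (n - k') (n - k'))) e"
    and disjoint_BA: "\<And>e. eigenvalue (cmat (submat B 0 0 k' k')) e \<Longrightarrow>
      \<not> eigenvalue (cmat (submat A k k (n - k) (n - k))) e"
  shows "k' = k"
    and "U = four_block_mat (submat U 0 0 k k) (0\<^sub>m k (n - k)) (0\<^sub>m (n - k) k)
      (submat U k k (n - k) (n - k))"
    and "real_orthogonal k (submat U 0 0 k k)"
    and "real_orthogonal (n - k) (submat U k k (n - k) (n - k))"
    and "submat B k k (n - k) (n - k) * submat U k k (n - k) (n - k) =
      submat U k k (n - k) (n - k) * submat A k k (n - k) (n - k)"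
proof -
  have U: "U \<in> carrier_mat n n" and UtU: "transpose_mat U * U = 1\<^sub>m n"
    using orth by (auto simp: real_orthogonal_def)
  have Ut: "transpose_mat U \<in> carrier_mat n n"
    using U by simp
  have AUt: "A * transpose_mat U = transpose_mat U * B"
    by (rule orthogonal_intertwiner_transpose[OF A B U UtU BU])
  have cmat_submat: "cmat (submat M a a (n - a) (n - a)) = submat (cmat M) a a (n - a) (n - a)"
    "cmat (submat M 0 0 a a) = submat (cmat M) 0 0 a a"
    if "M \<in> carrier_mat n n" "a \<le> n" for M a
    using that by (auto intro!: map_mat_submat)
  have lower: "U $$ (i, j) = 0" if "k' \<le> i" "i < n" "j < k" for i j
  proof -
    have "cmat U $$ (i, j) = 0"
      using A B U k k' that disjoint_AB
      by (intro intertwiner_lower_left_zero[of "cmat A" n "cmat B" "cmat U" k k'])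
        (auto simp: cmat_submat BU lower_left_zero_map_mat zA zB simp flip: cmat_mult)
    then show ?thesis
      using that U k k' by simp
  qed
  have upper: "U $$ (j, i) = 0" if "k \<le> i" "i < n" "j < k'" for i j
  proof -
    have "cmat (transpose_mat U) $$ (i, j) = 0"
      using A B Ut k k' that disjoint_BA
      by (intro intertwiner_lower_left_zero[of "cmat B" n "cmat A" "cmat (transpose_mat U)" k' k])
        (auto simp: cmat_submat AUt lower_left_zero_map_mat zA zB simp flip: cmat_mult)
    then show ?thesis
      using that U k k' by simp
  qed
  show "k' = k"
    using U UtU k k' lower upper by (rule orthogonal_zero_blocks_eq)
  then have off: "U $$ (i, j) = 0" if "i < n" "j < n" "(i < k) \<noteq> (j < k)" for i j
    using that lower upper by (cases "i < k") auto
  then show "U = four_block_mat (submat U 0 0 k k) (0\<^sub>m k (n - k)) (0\<^sub>m (n - k) k)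
      (submat U k k (n - k) (n - k))"
    and "real_orthogonal k (submat U 0 0 k k)"
    and "real_orthogonal (n - k) (submat U k k (n - k) (n - k))"
    using block_diagonal_orthogonal[OF orth k] by blast+
  have "lower_left_zero U k"
    using U off by (auto simp: lower_left_zero_def)
  then show "submat B k k (n - k) (n - k) * submat U k k (n - k) (n - k) =
      submat U k k (n - k) (n - k) * submat A k k (n - k) (n - k)"
    using intertwiner_lower_right_block[OF A B U BU k] zB \<open>k' = k\<close> by simp
qed

lemma blk_start_0 [simp]: "blk_start bs 0 = 0"
  by (simp add: blk_start_def)

lemma blk_start_Suc: "k < length bs \<Longrightarrow> blk_start bs (Suc k) = blk_start bs k + bs ! k"
  by (simp add: blk_start_def take_Suc_conv_app_nth)

lemma blk_start_add: "blk_start bs (j + k) = blk_start bs j + blk_start (drop j bs) k"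
  by (simp add: blk_start_def take_add)

lemma blk_start_take: "blk_start (take j bs) k = blk_start bs (min k j)"
  by (simp add: blk_start_def)

lemma blk_start_mono: "k \<le> k' \<Longrightarrow> blk_start bs k \<le> blk_start bs k'"
  using blk_start_add[of bs k "k' - k"] by simp

lemma blk_start_le_sum_list: "blk_start bs k \<le> sum_list bs"
  using sum_list_append[of "take k bs" "drop k bs"] by (simp add: blk_start_def)

lemma sum_list_drop_blk_start: "sum_list (drop j bs) = sum_list bs - blk_start bs j"
  using sum_list_append[of "take j bs" "drop j bs"] by (simp add: blk_start_def)

lemma blk_of_less_iff: "i < sum_list bs \<Longrightarrow> blk_of bs i < k \<longleftrightarrow> i < blk_start bs k"
proof -
  assume i: "i < sum_list bs"
  have ex: "i < blk_start bs (Suc (length bs))"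
    using i by (simp add: blk_start_def)
  show ?thesis
  proof
    assume "blk_of bs i < k"
    then have "blk_start bs (Suc (blk_of bs i)) \<le> blk_start bs k"
      by (intro blk_start_mono) simp
    moreover have "i < blk_start bs (Suc (blk_of bs i))"
      unfolding blk_of_def using ex by (rule LeastI)
    ultimately show "i < blk_start bs k" by simp
  next
    assume "i < blk_start bs k"
    then obtain k0 where "k = Suc k0" and "i < blk_start bs (Suc k0)"
      by (cases k) auto
    then show "blk_of bs i < k"
      unfolding blk_of_def using Least_le[of "\<lambda>k. i < blk_start bs (Suc k)" k0] by simp
  qed
qed

definition block_upper_triangular :: "'a::zero mat \<Rightarrow> nat list \<Rightarrow> bool" where
  "block_upper_triangular M bs \<longleftrightarrow>
     M \<in> carrier_mat (sum_list bs) (sum_list bs) \<and> (\<forall>k. lower_left_zero M (blk_start bs k))"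

lemma real_schur_form_block_upper_triangular:
  assumes "real_schur_form A bs l"
  shows "block_upper_triangular A bs"
  unfolding block_upper_triangular_def lower_left_zero_def
proof (intro conjI allI impI)
  show A: "A \<in> carrier_mat (sum_list bs) (sum_list bs)"
    using assms by (simp add: real_schur_form_def)
  fix k i j assume "i < dim_row A" "j < blk_start bs k" "blk_start bs k \<le> i"
  moreover from this have "j < sum_list bs" "i < sum_list bs"
    using A blk_start_le_sum_list[of bs k] by auto
  ultimately have "blk_of bs j < blk_of bs i"
    using blk_of_less_iff[of j bs k] blk_of_less_iff[of i bs k] by auto
  with \<open>j < sum_list bs\<close> \<open>i < sum_list bs\<close> show "A $$ (i, j) = 0"
    using assms by (simp add: real_schur_form_def)
qed

lemma block_upper_triangular_drop:
  fixes j :: nat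
  assumes "block_upper_triangular M bs"
  defines "p \<equiv> blk_start bs j" and "n \<equiv> sum_list bs"
  shows "block_upper_triangular (submat M p p (n - p) (n - p)) (drop j bs)"
  unfolding block_upper_triangular_def lower_left_zero_def
proof (intro conjI allI impI)
  show "submat M p p (n - p) (n - p) \<in> carrier_mat (sum_list (drop j bs)) (sum_list (drop j bs))"
    by (simp add: sum_list_drop_blk_start p_def n_def)
  fix k i c assume i: "i < dim_row (submat M p p (n - p) (n - p))"
    and c: "c < blk_start (drop j bs) k" "blk_start (drop j bs) k \<le> i"
  have "lower_left_zero M (blk_start bs (j + k))"
    using assms(1) by (simp add: block_upper_triangular_def)
  then have "M $$ (p + i, p + c) = 0"
    using assms(1) i c blk_start_add[of bs j k] blk_start_le_sum_list[of bs j]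
    by (intro lower_left_zeroD) (auto simp: block_upper_triangular_def p_def n_def)
  then show "submat M p p (n - p) (n - p) $$ (i, c) = 0"
    using i c by simp
qed

lemma block_upper_triangular_take:
  fixes j :: nat
  assumes "block_upper_triangular M bs"
  defines "p \<equiv> blk_start bs j"
  shows "block_upper_triangular (submat M 0 0 p p) (take j bs)"
  unfolding block_upper_triangular_def lower_left_zero_def
proof (intro conjI allI impI)
  show "submat M 0 0 p p \<in> carrier_mat (sum_list (take j bs)) (sum_list (take j bs))"
    by (simp add: p_def blk_start_def)
  fix k i c assume i: "i < dim_row (submat M 0 0 p p)"
    and c: "c < blk_start (take j bs) k" "blk_start (take j bs) k \<le> i"
  have "lower_left_zero M (blk_start bs (min k j))"
    using assms(1) by (simp add: block_upper_triangular_def)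
  then have "M $$ (i, c) = 0"
    using assms(1) i c blk_start_le_sum_list[of bs j]
    by (intro lower_left_zeroD) (auto simp: block_upper_triangular_def p_def blk_start_take)
  then show "submat M 0 0 p p $$ (i, c) = 0"
    using i c by simp
qed

lemma diag_blk_drop:
  fixes j k :: nat
  assumes k: "j + k < length bs"
  defines "p \<equiv> blk_start bs j" and "n \<equiv> sum_list bs"
  shows "diag_blk (submat M p p (n - p) (n - p)) (drop j bs) k = diag_blk M bs (j + k)"
proof -
  have "blk_start (drop j bs) k + drop j bs ! k \<le> n - p"
    using k blk_start_Suc[of k "drop j bs"] blk_start_le_sum_list[of "drop j bs" "Suc k"]
    by (simp add: sum_list_drop_blk_start p_def n_def)
  then show ?thesis
    using k by (intro eq_matI) (auto simp: diag_blk_def blk_start_add p_def add.assoc)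
qed

lemma diag_blk_take:
  fixes j k :: nat
  assumes "k < j" "k < length bs"
  defines "p \<equiv> blk_start bs j"
  shows "diag_blk (submat M 0 0 p p) (take j bs) k = diag_blk M bs k"
proof -
  have "blk_start bs k + bs ! k \<le> p"
    using assms blk_start_Suc[of k bs] blk_start_mono[of "Suc k" j bs] by simp
  then show ?thesis
    using assms by (intro eq_matI) (auto simp: diag_blk_def blk_start_take)
qed

lemma blk_eigs_drop:
  "j + k < length bs \<Longrightarrow>
   blk_eigs (submat M (blk_start bs j) (blk_start bs j) (sum_list bs - blk_start bs j)
     (sum_list bs - blk_start bs j)) (drop j bs) k = blk_eigs M bs (j + k)"
  by (simp add: blk_eigs_def diag_blk_drop)

lemma blk_eigs_take:
  "k < j \<Longrightarrow> k < length bs \<Longrightarrow>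
   blk_eigs (submat M 0 0 (blk_start bs j) (blk_start bs j)) (take j bs) k = blk_eigs M bs k"
  by (simp add: blk_eigs_def diag_blk_take)

lemma eigenvalue_block_upper_triangular:
  "block_upper_triangular M bs \<Longrightarrow> eigenvalue (cmat M) z \<longleftrightarrow> (\<exists>k<length bs. z \<in> blk_eigs M bs k)"
proof (induction bs arbitrary: M)
  case Nil
  then have "cmat M \<in> carrier_mat 0 0"
    by (simp add: block_upper_triangular_def)
  then show ?case
    using eigenvalue_imp_nonzero_dim[of "cmat M" 0 z] by auto
next
  case (Cons b bs)
  define n where "n = sum_list (b # bs)"
  have b: "blk_start (b # bs) 1 = b"
    by (simp add: blk_start_def)
  have M: "M \<in> carrier_mat n n" and "lower_left_zero M b"
    using Cons.prems b unfolding block_upper_triangular_def n_def by metis+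
  then have "eigenvalue (cmat M) z \<longleftrightarrow>
      eigenvalue (submat (cmat M) 0 0 b b) z \<or> eigenvalue (submat (cmat M) b b (n - b) (n - b)) z"
    by (intro eigenvalue_lower_left_zero) (auto simp: lower_left_zero_map_mat n_def)
  also have "submat (cmat M) 0 0 b b = cmat (diag_blk M (b # bs) 0)"
    using M by (intro eq_matI) (auto simp: diag_blk_def n_def)
  also have "submat (cmat M) b b (n - b) (n - b) = cmat (submat M b b (n - b) (n - b))"
    using M by (intro eq_matI) (auto simp: n_def)
  also have "eigenvalue (cmat (submat M b b (n - b) (n - b))) z \<longleftrightarrow>
      (\<exists>k<length bs. z \<in> blk_eigs M (b # bs) (Suc k))"
  proof -
    have "block_upper_triangular (submat M b b (n - b) (n - b)) bs"
      using block_upper_triangular_drop[OF Cons.prems, of 1] by (simp add: blk_start_def n_def)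
    then show ?thesis
      using blk_eigs_drop[of 1 _ "b # bs" M] by (auto simp: Cons.IH blk_start_def n_def)
  qed
  finally show ?case
    by (auto simp: blk_eigs_def less_Suc_eq_0_disj)
qed

lemma eigenvalue_upper_left_blocks:
  assumes "block_upper_triangular M bs" and "j \<le> length bs"
  shows "eigenvalue (cmat (submat M 0 0 (blk_start bs j) (blk_start bs j))) z \<longleftrightarrow>
    (\<exists>k<j. z \<in> blk_eigs M bs k)"
  using assms eigenvalue_block_upper_triangular[OF block_upper_triangular_take[OF assms(1)], of j z]
  by (auto simp: blk_eigs_take)

lemma eigenvalue_lower_right_blocks:
  fixes j :: nat
  assumes "block_upper_triangular M bs"
  defines "p \<equiv> blk_start bs j" and "n \<equiv> sum_list bs"
  shows "eigenvalue (cmat (submat M p p (n - p) (n - p))) z \<longleftrightarrow>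
    (\<exists>k. j \<le> k \<and> k < length bs \<and> z \<in> blk_eigs M bs k)"
proof -
  have "eigenvalue (cmat (submat M p p (n - p) (n - p))) z \<longleftrightarrow>
      (\<exists>k<length bs - j. z \<in> blk_eigs M bs (j + k))"
    using eigenvalue_block_upper_triangular[OF block_upper_triangular_drop[OF assms(1)], of j z]
    by (auto simp: blk_eigs_drop p_def n_def)
  also have "\<dots> \<longleftrightarrow> (\<exists>k. j \<le> k \<and> k < length bs \<and> z \<in> blk_eigs M bs k)"
  proof
    assume "\<exists>k<length bs - j. z \<in> blk_eigs M bs (j + k)"
    then obtain k where "k < length bs - j" "z \<in> blk_eigs M bs (j + k)" by blast
    then show "\<exists>k. j \<le> k \<and> k < length bs \<and> z \<in> blk_eigs M bs k"
      by (intro exI[of _ "j + k"]) auto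
  next
    assume "\<exists>k. j \<le> k \<and> k < length bs \<and> z \<in> blk_eigs M bs k"
    then obtain k where "j \<le> k" "k < length bs" "z \<in> blk_eigs M bs k" by blast
    then show "\<exists>k<length bs - j. z \<in> blk_eigs M bs (j + k)"
      by (intro exI[of _ "k - j"]) auto
  qed
  finally show ?thesis .
qed

section \<open>Eigenvalue pairs of the diagonal blocks\<close>

lemma det_mat2:
  fixes M :: "'a::comm_ring_1 mat"
  assumes M: "M \<in> carrier_mat 2 2"
  shows "det M = M $$ (0, 0) * M $$ (1, 1) - M $$ (0, 1) * M $$ (1, 0)"
proof -
  have "det M = (\<Sum>j<2. M $$ (0, j) * cofactor M 0 j)"
    using M by (intro laplace_expansion_row) auto
  also have "\<dots> = M $$ (0, 0) * cofactor M 0 0 + M $$ (0, 1) * cofactor M 0 1"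
    by (simp add: numeral_2_eq_2)
  also have "cofactor M 0 0 = M $$ (1, 1)"
    using M by (auto simp: cofactor_def det_single mat_delete_def)
  also have "cofactor M 0 1 = - M $$ (1, 0)"
    using M by (auto simp: cofactor_def det_single mat_delete_def)
  finally show ?thesis
    by (simp add: algebra_simps)
qed

lemma eigenvalue_mat1:
  fixes M :: "'a::field mat"
  assumes M: "M \<in> carrier_mat 1 1"
  shows "eigenvalue M z \<longleftrightarrow> z = M $$ (0, 0)"
  using M by (auto simp: eigenvalue_det[OF M] det_single char_matrix_def)

lemma eigenvalue_mat2:
  fixes M :: "'a::field mat"
  assumes M: "M \<in> carrier_mat 2 2"
  shows "eigenvalue M z \<longleftrightarrow>
    z\<^sup>2 - (M $$ (0, 0) + M $$ (1, 1)) * z + (M $$ (0, 0) * M $$ (1, 1) - M $$ (0, 1) * M $$ (1, 0)) = 0"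
  using M by (auto simp: eigenvalue_det[OF M] det_mat2 char_matrix_def power2_eq_square algebra_simps)

lemma real_quadratic_nonreal_roots:
  fixes t d :: real
  assumes nonreal: "\<And>z. z\<^sup>2 - of_real t * z + of_real d = 0 \<Longrightarrow> Im z \<noteq> 0"
  shows "\<exists>v. 0 < Im v \<and> {z. z\<^sup>2 - of_real t * z + of_real d = 0} = {v, cnj v}"
proof -
  define s where "s = csqrt (of_real (t\<^sup>2 - 4 * d))"
  define z0 where "z0 = (of_real t + s) / 2"
  have "4 * (z0\<^sup>2 - of_real t * z0 + of_real d) = s * s - (of_real t * of_real t - 4 * of_real d)"
    by (simp add: z0_def power2_eq_square field_simps)
  also have "s * s = of_real t * of_real t - 4 * of_real d"
    using power2_csqrt[of "of_real (t\<^sup>2 - 4 * d)"] by (simp add: s_def power2_eq_square)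
  finally have "4 * (z0\<^sup>2 - of_real t * z0 + of_real d) = 0"
    by simp
  then have root: "z0\<^sup>2 - of_real t * z0 + of_real d = 0"
    by (simp only: mult_eq_0_iff) simp
  have factor: "z\<^sup>2 - of_real t * z + of_real d = (z - z0) * (z - (of_real t - z0))" for z
    using root by (simp add: power2_eq_square algebra_simps)
  have "cnj (z0\<^sup>2 - of_real t * z0 + of_real d) = 0"
    using root by simp
  then have "(cnj z0 - z0) * (cnj z0 - (of_real t - z0)) = 0"
    by (simp add: factor[symmetric])
  then have "cnj z0 - z0 = 0 \<or> cnj z0 - (of_real t - z0) = 0"
    by simp
  moreover have "cnj z0 \<noteq> z0"
    using nonreal[OF root] by (simp add: complex_eq_iff)
  ultimately have roots: "{z. z\<^sup>2 - of_real t * z + of_real d = 0} = {z0, cnj z0}"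
    by (auto simp: factor)
  show ?thesis
  proof (cases "0 < Im z0")
    case True
    then show ?thesis using roots by blast
  next
    case False
    then have "0 < Im (cnj z0)"
      using nonreal[OF root] by simp
    then show ?thesis using roots by (intro exI[of _ "cnj z0"]) auto
  qed
qed

lemma real_schur_form_blk_size:
  assumes "real_schur_form A bs l" and "k < length bs"
  shows "bs ! k = (if k < l then 2 else 1)"
proof -
  have "l \<le> length bs" and bs: "bs = replicate l 2 @ replicate (length bs - l) 1"
    using assms(1) by (simp_all add: real_schur_form_def)
  have "bs ! k = (replicate l 2 @ replicate (length bs - l) 1) ! k"
    using bs by (rule arg_cong)
  then show ?thesis
    using assms(2) \<open>l \<le> length bs\<close> by (simp add: nth_append)
qed

lemma real_schur_form_blk_eigs:
  assumes schur: "real_schur_form A bs l" and k: "k < length bs"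
  shows "\<exists>v. 0 \<le> Im v \<and> blk_eigs A bs k = {v, cnj v} \<and> (Im v = 0 \<longleftrightarrow> l \<le> k)"
proof (cases "k < l")
  case True
  let ?B = "diag_blk A bs k"
  have B: "?B \<in> carrier_mat 2 2"
    using real_schur_form_blk_size[OF schur k] True by (simp add: diag_blk_def)
  define t where "t = ?B $$ (0, 0) + ?B $$ (1, 1)"
  define d where "d = ?B $$ (0, 0) * ?B $$ (1, 1) - ?B $$ (0, 1) * ?B $$ (1, 0)"
  have eigs: "blk_eigs A bs k = {z. z\<^sup>2 - of_real t * z + of_real d = 0}"
    using B by (simp add: blk_eigs_def eigenvalue_mat2 t_def d_def)
  have "Im z \<noteq> 0" if "z\<^sup>2 - of_real t * z + of_real d = 0" for z
    using schur True that by (auto simp: real_schur_form_def eigs)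
  then obtain v where "0 < Im v" "blk_eigs A bs k = {v, cnj v}"
    using real_quadratic_nonreal_roots unfolding eigs by blast
  then show ?thesis
    using True by (intro exI[of _ v]) auto
next
  case False
  let ?B = "diag_blk A bs k"
  have B: "?B \<in> carrier_mat 1 1"
    using real_schur_form_blk_size[OF schur k] False by (simp add: diag_blk_def)
  then have "blk_eigs A bs k = {of_real (?B $$ (0, 0))}"
    by (auto simp: blk_eigs_def eigenvalue_mat1)
  then show ?thesis
    using False by (intro exI[of _ "of_real (?B $$ (0, 0))"]) auto
qed

text \<open>Sorting by this key is the order of an ordered real Schur form: non-real pairs first, then
  by increasing modulus, then by decreasing real part.\<close>

definition schur_key :: "complex \<Rightarrow> bool \<times> real \<times> real" where
  "schur_key v = (Im v = 0, cmod v, - Re v)"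

lemma schur_key_inj:
  assumes "0 \<le> Im v" "0 \<le> Im w" "schur_key v = schur_key w"
  shows "v = w"
proof -
  have "cmod v = cmod w" and re: "Re v = Re w"
    using assms(3) by (auto simp: schur_key_def)
  then have "(Im v)\<^sup>2 = (Im w)\<^sup>2"
    by (metis add_left_cancel cmod_power2)
  then have "Im v = Im w"
    using assms(1,2) by (simp add: power2_eq_iff_nonneg)
  then show ?thesis
    using re by (simp add: complex_eq_iff)
qed

lemma conj_pair_eq:
  assumes "0 \<le> Im v" "0 \<le> Im w" "x \<in> {v, cnj v}" "x \<in> {w, cnj w}"
  shows "v = w"
  using assms by (auto simp: complex_eq_iff)

definition conj_pair_reps :: "real mat \<Rightarrow> nat list \<Rightarrow> (nat \<Rightarrow> complex) \<Rightarrow> bool" where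
  "conj_pair_reps A bs v \<longleftrightarrow> (\<forall>k<length bs. 0 \<le> Im (v k) \<and> blk_eigs A bs k = {v k, cnj (v k)})"

lemma conj_pair_repsD:
  assumes "conj_pair_reps A bs v" and "k < length bs"
  shows "0 \<le> Im (v k)" and "blk_eigs A bs k = {v k, cnj (v k)}"
  using assms by (simp_all add: conj_pair_reps_def)

lemma eigenvalue_conj_pair_reps:
  assumes "block_upper_triangular A bs" and v: "conj_pair_reps A bs v" and "0 \<le> Im z"
  shows "eigenvalue (cmat A) z \<longleftrightarrow> (\<exists>k<length bs. z = v k)"
proof -
  have "z \<in> blk_eigs A bs k \<longleftrightarrow> z = v k" if "k < length bs" for k
    using conj_pair_eq[OF assms(3) conj_pair_repsD(1)[OF v that], of z] conj_pair_repsD(2)[OF v that]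
    by auto
  then show ?thesis
    unfolding eigenvalue_block_upper_triangular[OF assms(1)] by blast
qed

definition sorted_conj_pair_blocks :: "real mat \<Rightarrow> nat list \<Rightarrow> bool" where
  "sorted_conj_pair_blocks A bs \<longleftrightarrow> block_upper_triangular A bs \<and>
     (\<exists>v. conj_pair_reps A bs v \<and>
          (\<forall>i j. i \<le> j \<longrightarrow> j < length bs \<longrightarrow> schur_key (v i) \<le> schur_key (v j)))"

lemma sorted_conj_pair_blocks_carrier:
  "sorted_conj_pair_blocks A bs \<Longrightarrow> A \<in> carrier_mat (sum_list bs) (sum_list bs)"
  by (simp add: sorted_conj_pair_blocks_def block_upper_triangular_def)

lemma sorted_conj_pair_blocks_lower_left_zero:
  "sorted_conj_pair_blocks A bs \<Longrightarrow> lower_left_zero A (blk_start bs j)"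
  by (simp add: sorted_conj_pair_blocks_def block_upper_triangular_def)

lemma ordered_real_schur_form_sorted_conj_pair_blocks:
  assumes ordered: "ordered_real_schur_form A bs l"
  shows "sorted_conj_pair_blocks A bs"
proof -
  have schur: "real_schur_form A bs l"
    using ordered by (simp add: ordered_real_schur_form_def)
  have "\<forall>k. \<exists>v. k < length bs \<longrightarrow>
      0 \<le> Im v \<and> blk_eigs A bs k = {v, cnj v} \<and> (Im v = 0 \<longleftrightarrow> l \<le> k)"
    using real_schur_form_blk_eigs[OF schur] by blast
  then obtain v where v: "\<forall>k<length bs.
      0 \<le> Im (v k) \<and> blk_eigs A bs k = {v k, cnj (v k)} \<and> (Im (v k) = 0 \<longleftrightarrow> l \<le> k)"
    by (elim choice[THEN exE]) (rule that)
  have "schur_key (v i) \<le> schur_key (v j)" if ij: "i < j" "j < length bs" for i j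
  proof -
    have vi: "v i \<in> blk_eigs A bs i" and vj: "v j \<in> blk_eigs A bs j"
      using v ij by auto
    consider "j < l \<or> l \<le> i" | "i < l" "l \<le> j"
      by linarith
    then show ?thesis
    proof cases
      case 1
      then have "\<forall>z\<in>blk_eigs A bs i. \<forall>w\<in>blk_eigs A bs j.
          cmod z \<le> cmod w \<and> (cmod z = cmod w \<longrightarrow> Re w \<le> Re z)"
        using ordered ij unfolding ordered_real_schur_form_def by auto
      then have "cmod (v i) \<le> cmod (v j) \<and> (cmod (v i) = cmod (v j) \<longrightarrow> Re (v j) \<le> Re (v i))"
        using vi vj by simp
      moreover have "Im (v i) = 0 \<longleftrightarrow> Im (v j) = 0"
        using 1 ij v by auto
      ultimately show ?thesis
        by (auto simp: schur_key_def less_eq_prod_def)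
    next
      case 2
      then show ?thesis
        using ij v by (auto simp: schur_key_def less_eq_prod_def)
    qed
  qed
  then have "\<forall>i j. i \<le> j \<longrightarrow> j < length bs \<longrightarrow> schur_key (v i) \<le> schur_key (v j)"
    by (metis order.order_iff_strict order_refl)
  moreover have "conj_pair_reps A bs v"
    using v by (simp add: conj_pair_reps_def)
  ultimately show ?thesis
    unfolding sorted_conj_pair_blocks_def
    using real_schur_form_block_upper_triangular[OF schur] by blast
qed

lemma sorted_conj_pair_blocks_drop:
  fixes j :: nat
  assumes "sorted_conj_pair_blocks A bs"
  defines "p \<equiv> blk_start bs j" and "n \<equiv> sum_list bs"
  shows "sorted_conj_pair_blocks (submat A p p (n - p) (n - p)) (drop j bs)"
proof -
  from assms(1) obtain v where
    triangular: "block_upper_triangular A bs" and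
    v: "conj_pair_reps A bs v" and
    sorted: "\<forall>i k. i \<le> k \<longrightarrow> k < length bs \<longrightarrow> schur_key (v i) \<le> schur_key (v k)"
    unfolding sorted_conj_pair_blocks_def by (elim conjE exE) (rule that)
  have "block_upper_triangular (submat A p p (n - p) (n - p)) (drop j bs)"
    using block_upper_triangular_drop[OF triangular] by (simp add: p_def n_def)
  moreover have "conj_pair_reps (submat A p p (n - p) (n - p)) (drop j bs) (\<lambda>k. v (j + k))"
    using v by (simp add: conj_pair_reps_def blk_eigs_drop p_def n_def)
  moreover have "\<forall>i k. i \<le> k \<longrightarrow> k < length (drop j bs) \<longrightarrow>
      schur_key (v (j + i)) \<le> schur_key (v (j + k))"
    using sorted by simp
  ultimately show ?thesis
    unfolding sorted_conj_pair_blocks_def by (intro conjI exI[of _ "\<lambda>k. v (j + k)"])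
qed

lemma mono_initial_run:
  fixes f :: "nat \<Rightarrow> 'a::linorder"
  assumes mono: "\<And>i j. i \<le> j \<Longrightarrow> j < N \<Longrightarrow> f i \<le> f j" and "0 < N"
  shows "\<exists>j. 0 < j \<and> j \<le> N \<and> (\<forall>k<j. f k = f 0) \<and> (\<forall>k. j \<le> k \<longrightarrow> k < N \<longrightarrow> f 0 < f k)"
proof (intro exI conjI allI impI)
  let ?P = "\<lambda>j. j = N \<or> (j < N \<and> f 0 < f j)"
  define j where "j = (LEAST j. ?P j)"
  have Pj: "?P j"
    unfolding j_def by (rule LeastI[of _ N]) simp
  show "j \<le> N"
    unfolding j_def by (rule Least_le) simp
  then show "f k = f 0" if "k < j" for k
    using not_less_Least[OF that[unfolded j_def]] mono[of 0 k] that by auto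
  show "0 < j"
    using Pj \<open>0 < N\<close> by (cases "j = 0") auto
  show "f 0 < f k" if "j \<le> k" "k < N" for k
    using Pj mono[of j k] that by auto
qed

lemma sorted_conj_pair_blocks_first_group:
  assumes "sorted_conj_pair_blocks A bs" and "bs \<noteq> []"
  obtains j v where "0 < j" "j \<le> length bs" "0 \<le> Im v"
    and "\<And>k. k < j \<Longrightarrow> blk_eigs A bs k = {v, cnj v}"
    and "\<And>k z. j \<le> k \<Longrightarrow> k < length bs \<Longrightarrow> z \<in> blk_eigs A bs k \<Longrightarrow> z \<notin> {v, cnj v}"
    and "eigenvalue (cmat A) v"
    and "\<And>z. eigenvalue (cmat A) z \<Longrightarrow> 0 \<le> Im z \<Longrightarrow> schur_key v \<le> schur_key z"
proof -
  from assms(1) obtain w where triangular: "block_upper_triangular A bs" and w: "conj_pair_reps A bs w"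
    and sorted: "\<forall>i k. i \<le> k \<longrightarrow> k < length bs \<longrightarrow> schur_key (w i) \<le> schur_key (w k)"
    unfolding sorted_conj_pair_blocks_def by (elim conjE exE) (rule that)
  have len: "0 < length bs"
    using assms(2) by simp
  have "\<exists>j. 0 < j \<and> j \<le> length bs \<and> (\<forall>k<j. schur_key (w k) = schur_key (w 0)) \<and>
      (\<forall>k. j \<le> k \<longrightarrow> k < length bs \<longrightarrow> schur_key (w 0) < schur_key (w k))"
    by (rule mono_initial_run[of "length bs" "\<lambda>k. schur_key (w k)"]) (simp_all add: sorted assms(2))
  then obtain j where j: "0 < j" "j \<le> length bs"
    and run: "\<forall>k<j. schur_key (w k) = schur_key (w 0)"
    and rest: "\<forall>k. j \<le> k \<longrightarrow> k < length bs \<longrightarrow> schur_key (w 0) < schur_key (w k)"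
    by (elim exE conjE) (rule that)
  note w_k = conj_pair_repsD[OF w]
  show thesis
  proof (rule that[OF j w_k(1)[OF len]])
    show "blk_eigs A bs k = {w 0, cnj (w 0)}" if "k < j" for k
    proof -
      have k: "k < length bs"
        using that j by simp
      have "w k = w 0"
        using run that by (intro schur_key_inj[OF w_k(1)[OF k] w_k(1)[OF len]]) blast
      then show ?thesis
        using w_k(2)[OF k] by simp
    qed
    show "z \<notin> {w 0, cnj (w 0)}" if k: "j \<le> k" "k < length bs" and z: "z \<in> blk_eigs A bs k" for k z
    proof
      assume "z \<in> {w 0, cnj (w 0)}"
      then have "w k = w 0"
        using conj_pair_eq[OF w_k(1)[OF k(2)] w_k(1)[OF len]] z w_k(2)[OF k(2)] by simp
      then show False
        using rest k by auto
    qed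
    show "eigenvalue (cmat A) (w 0)"
      using eigenvalue_conj_pair_reps[OF triangular w w_k(1)[OF len]] len by blast
    show "schur_key (w 0) \<le> schur_key z" if "eigenvalue (cmat A) z" "0 \<le> Im z" for z
      using that eigenvalue_conj_pair_reps[OF triangular w that(2)] sorted by auto
  qed
qed

section \<open>Splitting off the first eigenvalue group\<close>

lemma merge_runs_Cons_append:
  assumes "\<forall>x\<in>set xs. fst x = e" and "ys = [] \<or> fst (hd ys) \<noteq> e"
  shows "merge_runs ((e, s) # xs @ ys) = (s + sum_list (map snd xs)) # merge_runs ys"
  using assms
proof (induction xs arbitrary: s)
  case Nil
  then show ?case
    by (cases ys) auto
next
  case (Cons x xs)
  then obtain s' where "x = (e, s')"
    by (cases x) auto
  then show ?case
    using Cons by (simp add: add.assoc)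
qed

lemma eig_group_sizes_first_group:
  fixes j :: nat
  assumes j: "0 < j" "j \<le> length bs"
    and run: "\<And>k. k < j \<Longrightarrow> blk_eigs A bs k = E"
    and next_group: "j < length bs \<Longrightarrow> blk_eigs A bs j \<noteq> E"
  defines "p \<equiv> blk_start bs j" and "n \<equiv> sum_list bs"
  shows "eig_group_sizes A bs = p # eig_group_sizes (submat A p p (n - p) (n - p)) (drop j bs)"
proof -
  let ?g = "\<lambda>k. (blk_eigs A bs k, bs ! k)"
  have "[0..<length bs] = [0..<j] @ [j..<length bs]"
    using upt_add_eq_append[of 0 j "length bs - j"] j by simp
  also have "[0..<j] = 0 # [1..<j]"
    using j by (simp add: upt_conv_Cons)
  finally have upt_split: "map ?g [0..<length bs] = ?g 0 # map ?g [1..<j] @ map ?g [j..<length bs]"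
    by simp
  have "bs ! 0 + sum_list (map snd (map ?g [1..<j])) = sum_list (map (\<lambda>k. bs ! k) [0..<j])"
    using j by (simp add: upt_conv_Cons comp_def)
  also have "map (\<lambda>k. bs ! k) [0..<j] = take j bs"
    using j by (intro nth_equalityI) auto
  finally have size: "bs ! 0 + sum_list (map snd (map ?g [1..<j])) = p"
    by (simp add: p_def blk_start_def)
  have tail: "map ?g [j..<length bs] =
      map (\<lambda>k. (blk_eigs (submat A p p (n - p) (n - p)) (drop j bs) k, drop j bs ! k))
        [0..<length (drop j bs)]"
  proof -
    have "[j..<length bs] = map (\<lambda>k. k + j) [0..<length (drop j bs)]"
      using j by (simp add: map_add_upt)
    then show ?thesis
      by (simp add: blk_eigs_drop p_def n_def add.commute)
  qed
  have "eig_group_sizes A bs = merge_runs (?g 0 # map ?g [1..<j] @ map ?g [j..<length bs])"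
    unfolding eig_group_sizes_def upt_split ..
  also have "\<dots> = p # merge_runs (map ?g [j..<length bs])"
    using run next_group j size
    by (subst merge_runs_Cons_append) (auto simp: hd_map upt_conv_Cons)
  also have "merge_runs (map ?g [j..<length bs]) = eig_group_sizes (submat A p p (n - p) (n - p)) (drop j bs)"
    unfolding tail eig_group_sizes_def ..
  finally show ?thesis .
qed

lemma sorted_conj_pair_blocks_split:
  assumes "sorted_conj_pair_blocks A bs" and "bs \<noteq> []"
  defines "n \<equiv> sum_list bs"
  obtains j v where "0 < j" "j \<le> length bs" "0 \<le> Im v" "eigenvalue (cmat A) v"
    and "\<And>z. eigenvalue (cmat A) z \<Longrightarrow> 0 \<le> Im z \<Longrightarrow> schur_key v \<le> schur_key z"
    and "\<And>z. eigenvalue (cmat (submat A 0 0 (blk_start bs j) (blk_start bs j))) z \<Longrightarrow> z \<in> {v, cnj v}"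
    and "\<And>z. eigenvalue (cmat (submat A (blk_start bs j) (blk_start bs j)
      (n - blk_start bs j) (n - blk_start bs j))) z \<Longrightarrow> z \<notin> {v, cnj v}"
    and "eig_group_sizes A bs = blk_start bs j # eig_group_sizes (submat A (blk_start bs j) (blk_start bs j)
      (n - blk_start bs j) (n - blk_start bs j)) (drop j bs)"
proof -
  obtain j v where j: "0 < j" "j \<le> length bs" and v: "0 \<le> Im v"
    and run: "\<And>k. k < j \<Longrightarrow> blk_eigs A bs k = {v, cnj v}"
    and rest: "\<And>k z. j \<le> k \<Longrightarrow> k < length bs \<Longrightarrow> z \<in> blk_eigs A bs k \<Longrightarrow> z \<notin> {v, cnj v}"
    and eig_v: "eigenvalue (cmat A) v"
    and min_v: "\<And>z. eigenvalue (cmat A) z \<Longrightarrow> 0 \<le> Im z \<Longrightarrow> schur_key v \<le> schur_key z"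
    by (fact sorted_conj_pair_blocks_first_group[OF assms(1,2)])
  have triangular: "block_upper_triangular A bs"
    using assms(1) by (simp add: sorted_conj_pair_blocks_def)
  show thesis
  proof (rule that[OF j v eig_v min_v])
    show "z \<in> {v, cnj v}" if "eigenvalue (cmat (submat A 0 0 (blk_start bs j) (blk_start bs j))) z" for z
      using that eigenvalue_upper_left_blocks[OF triangular j(2)] run by auto
    show "z \<notin> {v, cnj v}" if "eigenvalue (cmat (submat A (blk_start bs j) (blk_start bs j)
        (n - blk_start bs j) (n - blk_start bs j))) z" for z
      using that eigenvalue_lower_right_blocks[OF triangular, of j] rest by (auto simp: n_def)
    show "eig_group_sizes A bs = blk_start bs j # eig_group_sizes (submat A (blk_start bs j) (blk_start bs j)
        (n - blk_start bs j) (n - blk_start bs j)) (drop j bs)"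
      unfolding n_def
    proof (rule eig_group_sizes_first_group[OF j run])
      show "blk_eigs A bs j \<noteq> {v, cnj v}" if "j < length bs"
        using rest[OF order.refl that, of v] by auto
    qed
  qed
qed

lemma orthogonal_intertwiner_first_group:
  assumes sorted_A: "sorted_conj_pair_blocks A bs" and sorted_B: "sorted_conj_pair_blocks B bs'"
    and sums: "sum_list bs' = sum_list bs" and "real_orthogonal (sum_list bs) U" and BU: "B * U = U * A"
    and "bs \<noteq> []"
  defines "n \<equiv> sum_list bs"
  obtains j p j' where "0 < j" "p = blk_start bs j" "blk_start bs' j' = p"
    and "U = four_block_mat (submat U 0 0 p p) (0\<^sub>m p (n - p)) (0\<^sub>m (n - p) p) (submat U p p (n - p) (n - p))"
    and "real_orthogonal p (submat U 0 0 p p)"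
    and "real_orthogonal (n - p) (submat U p p (n - p) (n - p))"
    and "submat B p p (n - p) (n - p) * submat U p p (n - p) (n - p) =
      submat U p p (n - p) (n - p) * submat A p p (n - p) (n - p)"
    and "eig_group_sizes A bs = p # eig_group_sizes (submat A p p (n - p) (n - p)) (drop j bs)"
proof -
  have A: "A \<in> carrier_mat n n" and B: "B \<in> carrier_mat n n"
    using sorted_conj_pair_blocks_carrier[OF sorted_A] sorted_conj_pair_blocks_carrier[OF sorted_B] sums
    by (simp_all add: n_def)
  have orth: "real_orthogonal n U"
    using assms(4) by (simp add: n_def)
  obtain j v where j: "0 < j" "j \<le> length bs" and v: "0 \<le> Im v" "eigenvalue (cmat A) v"
    and min_v: "\<And>z. eigenvalue (cmat A) z \<Longrightarrow> 0 \<le> Im z \<Longrightarrow> schur_key v \<le> schur_key z"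
    and head_A: "\<And>z. eigenvalue (cmat (submat A 0 0 (blk_start bs j) (blk_start bs j))) z \<Longrightarrow>
      z \<in> {v, cnj v}"
    and tail_A: "\<And>z. eigenvalue (cmat (submat A (blk_start bs j) (blk_start bs j)
      (n - blk_start bs j) (n - blk_start bs j))) z \<Longrightarrow> z \<notin> {v, cnj v}"
    and groups: "eig_group_sizes A bs = blk_start bs j # eig_group_sizes (submat A (blk_start bs j)
      (blk_start bs j) (n - blk_start bs j) (n - blk_start bs j)) (drop j bs)"
    by (fact sorted_conj_pair_blocks_split[OF sorted_A \<open>bs \<noteq> []\<close>, folded n_def])
  have "bs' \<noteq> []"
  proof
    assume "bs' = []"
    have "n = sum_list bs'"
      by (simp add: n_def sums)
    then have "cmat A \<in> carrier_mat 0 0"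
      using A \<open>bs' = []\<close> by simp
    then show False
      using v(2) eigenvalue_imp_nonzero_dim by blast
  qed
  obtain j' v' where v': "0 \<le> Im v'" "eigenvalue (cmat B) v'"
    and min_v': "\<And>z. eigenvalue (cmat B) z \<Longrightarrow> 0 \<le> Im z \<Longrightarrow> schur_key v' \<le> schur_key z"
    and head_B: "\<And>z. eigenvalue (cmat (submat B 0 0 (blk_start bs' j') (blk_start bs' j'))) z \<Longrightarrow>
      z \<in> {v', cnj v'}"
    and tail_B: "\<And>z. eigenvalue (cmat (submat B (blk_start bs' j') (blk_start bs' j')
      (n - blk_start bs' j') (n - blk_start bs' j'))) z \<Longrightarrow> z \<notin> {v', cnj v'}"
    using sorted_conj_pair_blocks_split[OF sorted_B \<open>bs' \<noteq> []\<close>, unfolded sums, folded n_def]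
    by metis
  \<comment> \<open>both first pairs have the least key in the common spectrum of A and B\<close>
  have "v' = v"
    using min_v[OF _ v'(1)] min_v'[OF _ v(1)] v(2) v'(2) schur_key_inj[OF v'(1) v(1)]
      orthogonal_intertwiner_eigenvalue_iff[OF A B orth BU] by fastforce
  have "blk_start bs j \<le> n" and "blk_start bs' j' \<le> n"
    using blk_start_le_sum_list[of bs j] blk_start_le_sum_list[of bs' j'] sums by (simp_all add: n_def)
  note splits = orthogonal_intertwiner_splits[OF A B orth BU this
      sorted_conj_pair_blocks_lower_left_zero[OF sorted_A] sorted_conj_pair_blocks_lower_left_zero[OF sorted_B]]
  show thesis
  proof (rule that[OF j(1) refl])
  qed (use splits head_A tail_A head_B tail_B \<open>v' = v\<close> groups in blast)+
qed

lemma orthogonal_intertwiner_diag_block_mat: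
  assumes "sorted_conj_pair_blocks A bs" and "sorted_conj_pair_blocks B bs'"
    and "sum_list bs' = sum_list bs" and "real_orthogonal (sum_list bs) U" and "B * U = U * A"
  shows "\<exists>Us. U = diag_block_mat Us \<and> map dim_row Us = eig_group_sizes A bs \<and>
    (\<forall>i<length Us. real_orthogonal (dim_row (Us ! i)) (Us ! i))"
  using assms
proof (induction "length bs" arbitrary: A B U bs bs' rule: less_induct)
  case less
  define n where "n = sum_list bs"
  show ?case
  proof (cases "bs = []")
    case True
    then have "U = diag_block_mat []"
      using less.prems(4) by (intro eq_matI) (auto simp: real_orthogonal_def)
    then show ?thesis
      using True by (simp add: eig_group_sizes_def)
  next
    case False
    obtain j p j' where "0 < j" and p: "p = blk_start bs j" and p': "blk_start bs' j' = p"
      and U: "U = four_block_mat (submat U 0 0 p p) (0\<^sub>m p (n - p)) (0\<^sub>m (n - p) p) (submat U p p (n - p) (n - p))"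
      and U1: "real_orthogonal p (submat U 0 0 p p)"
      and U4: "real_orthogonal (n - p) (submat U p p (n - p) (n - p))"
      and intertwine: "submat B p p (n - p) (n - p) * submat U p p (n - p) (n - p) =
        submat U p p (n - p) (n - p) * submat A p p (n - p) (n - p)"
      and groups: "eig_group_sizes A bs = p # eig_group_sizes (submat A p p (n - p) (n - p)) (drop j bs)"
      by (fact orthogonal_intertwiner_first_group[OF less.prems False, folded n_def])
    have "\<exists>Us. submat U p p (n - p) (n - p) = diag_block_mat Us \<and>
        map dim_row Us = eig_group_sizes (submat A p p (n - p) (n - p)) (drop j bs) \<and>
        (\<forall>i<length Us. real_orthogonal (dim_row (Us ! i)) (Us ! i))"
    proof (rule less.hyps[OF _ _ _ _ _ intertwine])
      show "length (drop j bs) < length bs"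
        using \<open>0 < j\<close> False by simp
      show "sorted_conj_pair_blocks (submat A p p (n - p) (n - p)) (drop j bs)"
        using sorted_conj_pair_blocks_drop[OF less.prems(1), of j] by (simp add: p n_def)
      show "sorted_conj_pair_blocks (submat B p p (n - p) (n - p)) (drop j' bs')"
        using sorted_conj_pair_blocks_drop[OF less.prems(2), of j'] p' less.prems(3) by (simp add: n_def)
      show "sum_list (drop j' bs') = sum_list (drop j bs)"
        using p' less.prems(3) by (simp add: sum_list_drop_blk_start p n_def)
      show "real_orthogonal (sum_list (drop j bs)) (submat U p p (n - p) (n - p))"
        using U4 by (simp add: sum_list_drop_blk_start p n_def)
    qed
    then obtain Us where Us: "submat U p p (n - p) (n - p) = diag_block_mat Us"
      "map dim_row Us = eig_group_sizes (submat A p p (n - p) (n - p)) (drop j bs)"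
      "\<forall>i<length Us. real_orthogonal (dim_row (Us ! i)) (Us ! i)"
      by (elim exE conjE) (rule that)
    have "diag_block_mat (submat U 0 0 p p # Us) =
        four_block_mat (submat U 0 0 p p) (0\<^sub>m p (n - p)) (0\<^sub>m (n - p) p) (submat U p p (n - p) (n - p))"
      by (simp add: Let_def flip: Us(1))
    moreover have "\<forall>i<Suc (length Us). real_orthogonal (dim_row ((submat U 0 0 p p # Us) ! i))
        ((submat U 0 0 p p # Us) ! i)"
      using Us(3) U1 by (auto simp: nth_Cons split: nat.split)
    ultimately show ?thesis
      using U Us(2) groups by (intro exI[of _ "submat U 0 0 p p # Us"]) simp
  qed
qed

theorem theorem9p2:
  fixes A Ahat U :: "real mat" and bs bs' :: "nat list" and l l' n :: nat
  assumes "sum_list bs = n" and "sum_list bs' = n"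
    and "ordered_real_schur_form A bs l"
    and "ordered_real_schur_form Ahat bs' l'"
    and "real_orthogonal n U"
    and "Ahat * U = U * A"
  shows "\<exists>Us. U = diag_block_mat Us \<and>
           map dim_row Us = eig_group_sizes A bs \<and>
           (\<forall>i < length Us. real_orthogonal (dim_row (Us ! i)) (Us ! i))"
proof (rule orthogonal_intertwiner_diag_block_mat)
  show "sorted_conj_pair_blocks A bs"
    using assms(3) by (rule ordered_real_schur_form_sorted_conj_pair_blocks)
  show "sorted_conj_pair_blocks Ahat bs'"
    using assms(4) by (rule ordered_real_schur_form_sorted_conj_pair_blocks)
qed (use assms in simp_all)

end
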